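(* Let $c:\mathbb{R}^d\to[0,\infty)$ be a cost function, let $(\alpha_k)_{k\ge 1}$ be a sequence of real weights, and let $\lambda>0$. Consider the optimization problem $$\min_{K\ge 0}\ \min_{\bm{\beta}=(\beta_1,\dots,\beta_K)\in\mathcal{P}_K}\Big(c(\beta_K)+\lambda\sum_{k=1}^K\alpha_k c(\beta_k)\Big),$$ where $\beta_0=0$. If $K^*$ and $\bm{\beta}^*\in\mathcal{P}_{K^*}$ attain this minimum, then the model $\beta^*_{K^*}$ is Pareto-optimal with respect to the two objectives $c(\cdot)$ and $\mathcal{L}_\alpha(\cdot)$ on $\mathbb{R}^d$, i.e. there is no $\beta\in\mathbb{R}^d$ with $c(\beta)\le c(\beta^*_{K^*})$ and $\mathcal{L}_\alpha(\beta)\le\mathcal{L}_\alpha(\beta^*_{K^*})$ with at least one inequality strict.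
   Context: For $\beta\in\mathbb{R}^d$, let $\mathcal{S}(\beta)=\{\theta\in\mathbb{R}^d:\|\beta-\theta\|_0\le 1\}$. A coordinate path of length $K\ge 0$ is a sequence $\bm{\beta}=(\beta_1,\dots,\beta_K)$ with $\beta_k\in\mathcal{S}(\beta_{k-1})$ for $1\le k\le K$, where $\beta_0=0$. $\mathcal{P}_K$ is the set of coordinate paths of length $K$, $\mathcal{P}=\bigcup_{K\ge 0}\mathcal{P}_K$, and for a model $\beta$, $\mathcal{P}(\beta)$ is the set of paths whose last model is $\beta$ (for $\beta=0$ including the empty path). The path loss is $\mathcal{L}_\alpha(\bm{\beta})=\sum_{k=1}^{|\bm{\beta}|}\alpha_k c(\beta_k)$ (zero for the empty path), and the model loss is $\mathcal{L}_\alpha(\beta)=\min_{\bm{\beta}\in\mathcal{P}(\beta)}\mathcal{L}_\alpha(\bm{\beta})$. *)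

theory Defs
  imports "HOL-Analysis.Analysis"
begin

definition l0_dist :: "real^'d \<Rightarrow> real^'d \<Rightarrow> nat" where
  "l0_dist \<beta> \<theta> = card {i. \<beta> $ i \<noteq> \<theta> $ i}"

definition coord_nbhd :: "real^'d \<Rightarrow> (real^'d) set" where
  "coord_nbhd \<beta> = {\<theta>. l0_dist \<beta> \<theta> \<le> 1}"

text \<open>A coordinate path (beta_1,...,beta_K) is the list [beta_1,...,beta_K]; beta_0 = 0.\<close>

definition is_coord_path :: "(real^'d) list \<Rightarrow> bool" where
  "is_coord_path bs \<longleftrightarrow>
     (\<forall>k < length bs. bs ! k \<in> coord_nbhd (if k = 0 then 0 else bs ! (k - 1)))"

definition paths_K :: "nat \<Rightarrow> (real^'d) list set" where
  "paths_K K = {bs. is_coord_path bs \<and> length bs = K}"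

definition last_model :: "(real^'d) list \<Rightarrow> real^'d" where
  "last_model bs = (if bs = [] then 0 else last bs)"

definition paths_to :: "real^'d \<Rightarrow> (real^'d) list set" where
  "paths_to \<beta> = {bs. is_coord_path bs \<and> last_model bs = \<beta>}"

definition path_loss :: "(nat \<Rightarrow> real) \<Rightarrow> (real^'d \<Rightarrow> real) \<Rightarrow> (real^'d) list \<Rightarrow> real" where
  "path_loss \<alpha> c bs = (\<Sum>k < length bs. \<alpha> (k + 1) * c (bs ! k))"

definition model_loss :: "(nat \<Rightarrow> real) \<Rightarrow> (real^'d \<Rightarrow> real) \<Rightarrow> real^'d \<Rightarrow> real" where
  "model_loss \<alpha> c \<beta> = Inf (path_loss \<alpha> c ` paths_to \<beta>)"

end

theory Submission
  imports Defs
begin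

text \<open>Since the model loss is the infimum of the path losses, minimising c(beta_K) + lam L(path)
  over coordinate paths is the same as minimising c + lam L over models, the minimum being
  attained at the last model of the optimal path. A minimiser of a positively weighted sum of
  two objectives is Pareto-optimal for them. The infimum is over a nonempty set because every
  model is reached by changing one coordinate at a time, and it is bounded below by the
  minimality of the optimal path itself, so the nonnegativity of c is never needed.\<close>

lemma not_pareto_dominated_if_minimises_weighted_sum:
  fixes f g :: "'a \<Rightarrow> real"
  assumes "lam > 0" and "\<And>y. f x + lam * g x \<le> f y + lam * g y"
  shows "\<not> (\<exists>y. f y \<le> f x \<and> g y \<le> g x \<and> (f y < f x \<or> g y < g x))"
proof
  assume "\<exists>y. f y \<le> f x \<and> g y \<le> g x \<and> (f y < f x \<or> g y < g x)"
  then obtain y where "f y \<le> f x" "lam * g y \<le> lam * g x" "f y < f x \<or> lam * g y < lam * g x"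
    using \<open>lam > 0\<close> by auto
  then show False
    using assms(2)[of y] by linarith
qed

lemma is_coord_path_snoc:
  assumes "is_coord_path bs" and "t \<in> coord_nbhd (last_model bs)"
  shows "is_coord_path (bs @ [t])"
  unfolding is_coord_path_def
proof (intro allI impI)
  fix k assume k: "k < length (bs @ [t])"
  show "(bs @ [t]) ! k \<in> coord_nbhd (if k = 0 then 0 else (bs @ [t]) ! (k - 1))"
  proof (cases "k < length bs")
    case True
    then show ?thesis
      using assms(1) by (auto simp: is_coord_path_def nth_append)
  next
    case False
    with k have "k = length bs" by simp
    then show ?thesis
      using assms(2) by (cases "bs = []") (auto simp: nth_append last_model_def last_conv_nth)
  qed
qed

lemma in_coord_nbhd_if_agree_off:
  fixes a b :: "real^'d"
  assumes "\<And>i. i \<noteq> x \<Longrightarrow> a $ i = b $ i"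
  shows "b \<in> coord_nbhd a"
proof -
  have "{i. a $ i \<noteq> b $ i} \<subseteq> {x}"
    using assms by auto
  then have "card {i. a $ i \<noteq> b $ i} \<le> 1"
    using card_mono[of "{x}"] by fastforce
  then show ?thesis
    by (simp add: coord_nbhd_def l0_dist_def)
qed

lemma exists_coord_path_to_restriction:
  fixes \<beta> :: "real^'d"
  assumes "finite S"
  shows "\<exists>bs. is_coord_path bs \<and> last_model bs = (\<chi> i. if i \<in> S then \<beta> $ i else 0)"
  using assms
proof (induction S rule: finite_induct)
  case empty
  have "(\<chi> i. if i \<in> {} then \<beta> $ i else 0) = (0::real^'d)"
    by (simp add: vec_eq_iff)
  then show ?case
    by (intro exI[of _ "[]"]) (simp add: is_coord_path_def last_model_def)
next
  case (insert x F)
  then obtain bs where bs: "is_coord_path bs" "last_model bs = (\<chi> i. if i \<in> F then \<beta> $ i else 0)"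
    by blast
  define t :: "real^'d" where "t = (\<chi> i. if i \<in> insert x F then \<beta> $ i else 0)"
  have "t \<in> coord_nbhd (last_model bs)"
    unfolding bs(2) t_def by (rule in_coord_nbhd_if_agree_off[of x]) auto
  with bs(1) have "is_coord_path (bs @ [t])"
    by (rule is_coord_path_snoc)
  then show ?case
    by (intro exI[of _ "bs @ [t]"]) (simp add: last_model_def t_def)
qed

lemma paths_to_nonempty: "paths_to \<beta> \<noteq> {}"
proof -
  obtain bs where "is_coord_path bs" "last_model bs = (\<chi> i. if i \<in> UNIV then \<beta> $ i else 0)"
    using exists_coord_path_to_restriction[of UNIV \<beta>] by auto
  then show ?thesis
    by (auto simp: paths_to_def vec_eq_iff)
qed

lemma model_loss_le_path_loss:
  assumes "bdd_below (path_loss \<alpha> c ` paths_to \<beta>)" and "bs \<in> paths_to \<beta>"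
  shows "model_loss \<alpha> c \<beta> \<le> path_loss \<alpha> c bs"
  unfolding model_loss_def using assms by (intro cInf_lower) auto

lemma le_model_loss:
  assumes "\<And>bs. bs \<in> paths_to \<beta> \<Longrightarrow> y \<le> path_loss \<alpha> c bs"
  shows "y \<le> model_loss \<alpha> c \<beta>"
  unfolding model_loss_def using assms paths_to_nonempty by (intro cInf_greatest) auto

lemma last_model_minimises_scalarised_model_loss:
  assumes "lam > 0" and "is_coord_path bstar"
    and min: "\<And>bs. is_coord_path bs \<Longrightarrow>
        c (last_model bstar) + lam * path_loss \<alpha> c bstar \<le> c (last_model bs) + lam * path_loss \<alpha> c bs"
  shows "c (last_model bstar) + lam * model_loss \<alpha> c (last_model bstar) \<le> c \<gamma> + lam * model_loss \<alpha> c \<gamma>"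
proof -
  define M where "M = c (last_model bstar) + lam * path_loss \<alpha> c bstar"
  have path_bound: "(M - c \<beta>) / lam \<le> path_loss \<alpha> c bs" if "bs \<in> paths_to \<beta>" for \<beta> bs
  proof -
    from that have "M \<le> c \<beta> + lam * path_loss \<alpha> c bs"
      using min unfolding M_def paths_to_def by blast
    then show ?thesis
      using \<open>lam > 0\<close> by (simp add: field_simps)
  qed
  have "bstar \<in> paths_to (last_model bstar)"
    using \<open>is_coord_path bstar\<close> by (simp add: paths_to_def)
  moreover have "bdd_below (path_loss \<alpha> c ` paths_to (last_model bstar))"
    using path_bound by (intro bdd_belowI) auto
  ultimately have "c (last_model bstar) + lam * model_loss \<alpha> c (last_model bstar) \<le> M"
    using \<open>lam > 0\<close> model_loss_le_path_loss unfolding M_def by auto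
  also have "M \<le> c \<gamma> + lam * model_loss \<alpha> c \<gamma>"
    using le_model_loss[of \<gamma> "(M - c \<gamma>) / lam"] path_bound \<open>lam > 0\<close> by (simp add: field_simps)
  finally show ?thesis .
qed

theorem proposition1:
  fixes c :: "real^'d \<Rightarrow> real" and \<alpha> :: "nat \<Rightarrow> real" and lam :: real
    and Kstar :: nat and bstar :: "(real^'d) list"
  assumes c_nonneg: "\<And>\<beta>. c \<beta> \<ge> 0"
    and lam_pos: "lam > 0"
    and bstar_path: "bstar \<in> paths_K Kstar"
    and bstar_min: "\<And>K bs. bs \<in> paths_K K \<Longrightarrow>
        c (last_model bstar) + lam * path_loss \<alpha> c bstar \<le> c (last_model bs) + lam * path_loss \<alpha> c bs"
  shows "\<not> (\<exists>\<beta>. c \<beta> \<le> c (last_model bstar)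
              \<and> model_loss \<alpha> c \<beta> \<le> model_loss \<alpha> c (last_model bstar)
              \<and> (c \<beta> < c (last_model bstar) \<or> model_loss \<alpha> c \<beta> < model_loss \<alpha> c (last_model bstar)))"
proof (rule not_pareto_dominated_if_minimises_weighted_sum[OF lam_pos])
  fix \<gamma>
  have "is_coord_path bstar"
    using bstar_path by (simp add: paths_K_def)
  moreover have "c (last_model bstar) + lam * path_loss \<alpha> c bstar \<le> c (last_model bs) + lam * path_loss \<alpha> c bs"
    if "is_coord_path bs" for bs
    using that bstar_min[of bs "length bs"] by (simp add: paths_K_def)
  ultimately show "c (last_model bstar) + lam * model_loss \<alpha> c (last_model bstar) \<le> c \<gamma> + lam * model_loss \<alpha> c \<gamma>"
    using last_model_minimises_scalarised_model_loss[OF lam_pos] by blast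
qed

end
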